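(* Let $n\ge1$ and $C_n=\{x\in\mathbb{R}^n:|x_1|+\dots+|x_n|\le1\}$. For generic $y\in\mathbb{R}^n$ (all $y_j^2$ distinct and nonzero), \[ \widehat{\chi_{C_n}}(y)=\begin{cases}\pi^{-n}(-1)^{(n-1)/2}\displaystyle\sum_{j=1}^n\frac{y_j^{n-2}\sin(2\pi y_j)}{\prod_{i\ne j}(y_j^2-y_i^2)}, & n\text{ odd},\\[2ex] \pi^{-n}(-1)^{n/2-1}\displaystyle\sum_{j=1}^n\frac{2y_j^{n-2}\sin(\pi y_j)^2}{\prod_{i\ne j}(y_j^2-y_i^2)}, & n\text{ even}.\end{cases} \]
   Context: $\chi_S$ denotes the indicator function of a set $S$ and $\widehat f(y)=\int f(x)e^{-2\pi i\langle x,y\rangle}dx$. *)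

theory Defs
  imports "HOL-Analysis.Analysis"
begin

definition fourier_transform :: "('a::euclidean_space \<Rightarrow> complex) \<Rightarrow> 'a \<Rightarrow> complex" where
  "fourier_transform f y = integral UNIV (\<lambda>x. f x * exp (- 2 * pi * \<i> * complex_of_real (x \<bullet> y)))"

definition cross_polytope :: "(real ^ 'n) set" where
  "cross_polytope = {x. (\<Sum>i\<in>UNIV. \<bar>x $ i\<bar>) \<le> 1}"

end

(* Let Phi_I(t) be the integral of exp (-i a.x) over the l1 ball of radius t in R^I.
   Integrating out one coordinate gives Phi_{I+k}(t) = int exp (-i a_k s) Phi_I (t - |s|) ds,
   so by induction Phi_I(t) is 2^|I| times the divided difference of z -> z^(|I|-1) e^(z t) at
   the nodes +-i a_j: the convolution adjoins the two nodes +-i a_k, and the boundary terms it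
   produces cancel because divided differences of monomials of low degree vanish.  At t = 1 and
   a_j = 2 pi y_j the divided difference over the symmetric node set is a sum over j of the odd
   part of z^(n-1) e^z at z = 2 pi i y_j, a sine for odd n and a cosine for even n.  For even n
   write cos = 1 - 2 sin^2; the constant part drops out by the same vanishing, now at the nodes
   y_j^2. *)

theory Submission
  imports Defs
begin

section \<open>Divided differences\<close>

definition divdiff :: "'a::field set \<Rightarrow> ('a \<Rightarrow> 'a) \<Rightarrow> 'a" where
  "divdiff S f = (\<Sum>x\<in>S. f x / (\<Prod>l\<in>S - {x}. x - l))"

lemma divdiff_cong: "(\<And>x. x \<in> S \<Longrightarrow> f x = g x) \<Longrightarrow> divdiff S f = divdiff S g"
  unfolding divdiff_def by (rule sum.cong) simp_all

lemma divdiff_add: "divdiff S (\<lambda>x. f x + g x) = divdiff S f + divdiff S g"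
  unfolding divdiff_def by (simp add: add_divide_distrib sum.distrib)

lemma divdiff_cmult: "divdiff S (\<lambda>x. c * f x) = c * divdiff S f"
  unfolding divdiff_def by (simp add: sum_distrib_left mult.assoc)

lemma divdiff_image:
  assumes "inj_on g J"
  shows "divdiff (g ` J) f = (\<Sum>j\<in>J. f (g j) / (\<Prod>i\<in>J - {j}. g j - g i))"
proof -
  have "g ` J - {g j} = g ` (J - {j})" if "j \<in> J" for j
    using assms that by (auto simp: inj_on_eq_iff)
  moreover have "inj_on g (J - {j})" for j
    using assms by (rule inj_on_subset) auto
  ultimately show ?thesis
    unfolding divdiff_def using assms by (simp add: sum.reindex prod.reindex)
qed

lemma divdiff_doubleton:
  "x \<noteq> y \<Longrightarrow> divdiff {x, y} f = f x / (x - y) + f y / (y - x)"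
  by (simp add: divdiff_def insert_Diff_if)

lemma divdiff_insert:
  assumes "finite L" "\<mu> \<notin> L"
  shows "divdiff (insert \<mu> L) f = f \<mu> / (\<Prod>x\<in>L. \<mu> - x) + divdiff L (\<lambda>l. f l / (l - \<mu>))"
proof -
  have "(\<Prod>x\<in>insert \<mu> L - {l}. l - x) = (l - \<mu>) * (\<Prod>x\<in>L - {l}. l - x)" if "l \<in> L" for l
  proof -
    have "insert \<mu> L - {l} = insert \<mu> (L - {l})" using that assms by auto
    then show ?thesis using assms by simp
  qed
  then show ?thesis
    unfolding divdiff_def using assms by (simp add: insert_Diff_if divide_divide_eq_left mult.commute)
qed

lemma divdiff_mult_id:
  assumes "finite S" "x0 \<in> S"
  shows "divdiff S (\<lambda>x. x * f x) = x0 * divdiff S f + divdiff (S - {x0}) f"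
proof -
  obtain L where L: "S = insert x0 L" "x0 \<notin> L" "finite L"
    using assms by (intro that[of "S - {x0}"]) auto
  have "divdiff S (\<lambda>x. x * f x) - x0 * divdiff S f = divdiff S (\<lambda>x. (x - x0) * f x)"
    unfolding divdiff_def by (simp add: sum_distrib_left sum_subtractf[symmetric] algebra_simps diff_divide_distrib)
  also have "\<dots> = divdiff L (\<lambda>l. (l - x0) * f l / (l - x0))"
    using L by (simp add: divdiff_insert)
  also have "\<dots> = divdiff L f"
    by (rule divdiff_cong) (use L in auto)
  finally show ?thesis using L by (simp add: algebra_simps)
qed

lemma divdiff_recurrence:
  assumes "finite S" "x0 \<in> S" "x1 \<in> S" "x0 \<noteq> x1"
  shows "divdiff S f = (divdiff (S - {x1}) f - divdiff (S - {x0}) f) / (x0 - x1)"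
proof -
  have "x0 * divdiff S f + divdiff (S - {x0}) f = x1 * divdiff S f + divdiff (S - {x1}) f"
    using divdiff_mult_id[OF assms(1,2), of f] divdiff_mult_id[OF assms(1,3), of f] by simp
  then show ?thesis using assms(4) by (simp add: field_simps)
qed

lemma divdiff_eq_0_above_card:
  assumes const: "\<And>T. finite T \<Longrightarrow> card T = k \<Longrightarrow> divdiff T f = c" and "1 \<le> k"
  shows "finite S \<Longrightarrow> k < card S \<Longrightarrow> divdiff S f = 0"
proof (induction "card S" arbitrary: S rule: less_induct)
  case less
  obtain x0 x1 where x: "x0 \<in> S" "x1 \<in> S" "x0 \<noteq> x1"
  proof -
    have "\<not> card S \<le> Suc 0" using less.prems \<open>1 \<le> k\<close> by linarith
    then show ?thesis using that card_le_Suc0_iff_eq[OF less.prems(1)] by blast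
  qed
  have card: "card (S - {x}) = card S - 1" if "x \<in> S" for x
    using less.prems that by simp
  have "divdiff (S - {x0}) f = divdiff (S - {x1}) f"
  proof (cases "card S = Suc k")
    case True
    then show ?thesis using const card x less.prems by simp
  next
    case False
    then show ?thesis using less.hyps card x less.prems by (simp add: card_gt_0_iff)
  qed
  then show ?case using divdiff_recurrence[OF less.prems(1) x] by simp
qed

lemma divdiff_power_card_Suc:
  "finite S \<Longrightarrow> card S = Suc d \<Longrightarrow> divdiff S (\<lambda>x. x ^ d) = 1"
proof (induction d arbitrary: S)
  case 0
  then show ?case by (auto simp: divdiff_def card_1_singleton_iff)
next
  case (Suc d)
  obtain x0 where x0: "x0 \<in> S" using Suc.prems by fastforce
  have "divdiff S (\<lambda>x. x ^ d) = 0"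
    by (rule divdiff_eq_0_above_card[OF Suc.IH]) (use Suc.prems in auto)
  moreover have "divdiff (S - {x0}) (\<lambda>x. x ^ d) = 1"
    using Suc.IH Suc.prems x0 by simp
  ultimately show ?case
    using divdiff_mult_id[OF Suc.prems(1) x0, of "\<lambda>x. x ^ d"] by simp
qed

lemma divdiff_power_eq_0:
  "finite S \<Longrightarrow> Suc d < card S \<Longrightarrow> divdiff S (\<lambda>x. x ^ d) = 0"
  by (rule divdiff_eq_0_above_card[OF divdiff_power_card_Suc]) auto

lemma divdiff_power_div_diff:
  assumes "finite L" "c \<notin> L" "k < card L"
  shows "divdiff L (\<lambda>l. l ^ k / (l - c)) = - (c ^ k) / (\<Prod>x\<in>L. c - x)"
proof -
  have "divdiff (insert c L) (\<lambda>x. x ^ k) = 0"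
    using assms by (intro divdiff_power_eq_0) auto
  then show ?thesis
    using divdiff_insert[OF assms(1,2), of "\<lambda>x. x ^ k"] by (simp add: eq_neg_iff_add_eq_0 add.commute)
qed

lemma divdiff_insert_pm:
  fixes L :: "'a::field_char_0 set" and E :: "'a \<Rightarrow> 'a"
  assumes L: "finite L" "k < card L" and \<mu>: "\<mu> \<noteq> 0" "\<mu> \<notin> L" "- \<mu> \<notin> L"
  shows "divdiff L (\<lambda>l. l ^ k * ((E (- \<mu>) - E l) / (- \<mu> - l) + (E \<mu> - E l) / (\<mu> - l))) =
    2 * divdiff (insert \<mu> (insert (- \<mu>) L)) (\<lambda>z. z ^ Suc k * E z)"
proof -
  let ?Q = "\<lambda>c. \<Prod>x\<in>L. c - x"
  let ?F = "\<lambda>l. l * l ^ k * E l / (l - \<mu>) / (l - - \<mu>)"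
  have Q: "?Q \<mu> \<noteq> 0" "?Q (- \<mu>) \<noteq> 0"
    using L \<mu> by (auto simp: prod_zero_iff)
  have "divdiff L (\<lambda>l. l ^ k * ((E (- \<mu>) - E l) / (- \<mu> - l) + (E \<mu> - E l) / (\<mu> - l))) =
      divdiff L (\<lambda>l. 2 * ?F l + (- E (- \<mu>)) * (l ^ k / (l - - \<mu>)) + (- E \<mu>) * (l ^ k / (l - \<mu>)))"
  proof (rule divdiff_cong)
    fix l assume "l \<in> L"
    then have "l - \<mu> \<noteq> 0" "l - - \<mu> \<noteq> 0"
      using \<mu> by (auto simp: add_eq_0_iff2)
    then have "2 * ?F l = l ^ k * E l / (l - - \<mu>) + l ^ k * E l / (l - \<mu>)"
      by (simp add: field_simps)
    moreover have "(E (- \<mu>) - E l) / (- \<mu> - l) = (E l - E (- \<mu>)) / (l - - \<mu>)"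
      "(E \<mu> - E l) / (\<mu> - l) = (E l - E \<mu>) / (l - \<mu>)"
      by (metis minus_divide_divide minus_diff_eq minus_minus diff_minus_eq_add)+
    moreover have "p * ((e - A) / v + (e - B) / u) = p * e / v + p * e / u + (- A) * (p / v) + (- B) * (p / u)"
      for p e A B u v :: 'a
      by (simp add: divide_inverse algebra_simps)
    ultimately show "l ^ k * ((E (- \<mu>) - E l) / (- \<mu> - l) + (E \<mu> - E l) / (\<mu> - l)) =
      2 * ?F l + (- E (- \<mu>)) * (l ^ k / (l - - \<mu>)) + (- E \<mu>) * (l ^ k / (l - \<mu>))"
      by (simp only:)
  qed
  \<comment> \<open>The boundary terms \<open>E (\<plusminus>\<mu>)\<close> become the contributions of the two new nodes.\<close>
  also have "\<dots> = 2 * divdiff L ?F + E (- \<mu>) * (- \<mu>) ^ k / ?Q (- \<mu>) + E \<mu> * \<mu> ^ k / ?Q \<mu>"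
    unfolding divdiff_add divdiff_cmult
      divdiff_power_div_diff[OF L(1) \<mu>(2) L(2)] divdiff_power_div_diff[OF L(1) \<mu>(3) L(2)]
    by simp
  also have "\<dots> = 2 * divdiff (insert \<mu> (insert (- \<mu>) L)) (\<lambda>z. z ^ Suc k * E z)"
    using L \<mu> Q by (simp add: divdiff_insert field_simps)
  finally show ?thesis .
qed

definition pm_nodes :: "('j \<Rightarrow> 'a::ab_group_add) \<Rightarrow> 'j set \<Rightarrow> 'a set" where
  "pm_nodes w J = w ` J \<union> (\<lambda>j. - w j) ` J"

lemma pm_nodes_insert: "pm_nodes w (insert k J) = insert (w k) (insert (- w k) (pm_nodes w J))"
  by (auto simp: pm_nodes_def)

lemma finite_pm_nodes: "finite J \<Longrightarrow> finite (pm_nodes w J)"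
  by (simp add: pm_nodes_def)

lemma pm_nodes_image: "pm_nodes w (g ` J) = pm_nodes (\<lambda>j. w (g j)) J"
  by (simp add: pm_nodes_def image_image)

lemma divdiff_pm_nodes:
  fixes w :: "'j \<Rightarrow> 'a::field_char_0"
  assumes fin: "finite J" and inj: "inj_on w J" and pm: "\<forall>i\<in>J. \<forall>j\<in>J. w i \<noteq> - w j"
  shows "divdiff (pm_nodes w J) f =
    (\<Sum>j\<in>J. (f (w j) - f (- w j)) / (2 * w j * (\<Prod>i\<in>J - {j}. w j ^ 2 - w i ^ 2)))"
proof -
  define g where "g = (\<lambda>(j, s). if s then w j else - w j)"
  let ?P = "\<lambda>j. \<Prod>i\<in>J - {j}. w j ^ 2 - w i ^ 2"
  have "w j \<in> g ` (J \<times> UNIV)" "- w j \<in> g ` (J \<times> UNIV)" if "j \<in> J" for j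
    using that by (auto simp: g_def intro: image_eqI[where x = "(j, True)"] image_eqI[where x = "(j, False)"])
  then have nodes: "pm_nodes w J = g ` (J \<times> UNIV)"
    unfolding pm_nodes_def by (auto simp: g_def)
  have "inj_on g (J \<times> UNIV)"
  proof (rule inj_onI, clarify)
    fix i j s s' assume ij: "i \<in> J" "j \<in> J" and eq: "g (i, s) = g (j, s')"
    show "i = j \<and> s = s'"
    proof -
      have "w i \<noteq> - w j" "- w i \<noteq> w j"
        using pm ij by (metis minus_minus)+
      then show ?thesis
        using eq inj ij by (cases s; cases s') (auto simp: g_def inj_on_eq_iff)
    qed
  qed
  then have "divdiff (pm_nodes w J) f = (\<Sum>q\<in>J \<times> UNIV. f (g q) / (\<Prod>p\<in>J \<times> UNIV - {q}. g q - g p))"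
    unfolding nodes by (rule divdiff_image)
  also have "\<dots> = (\<Sum>(j, s)\<in>J \<times> UNIV. f (g (j, s)) / (2 * g (j, s) * ?P j))"
  proof (rule sum.cong[OF refl], clarify)
    fix j s assume j: "j \<in> J"
    have "J \<times> UNIV - {(j, s)} = insert (j, \<not> s) ((J - {j}) \<times> UNIV)"
      using j by auto
    moreover have "g (j, s) - g (j, \<not> s) = 2 * g (j, s)"
      by (cases s) (simp_all add: g_def)
    moreover have "(\<Prod>p\<in>(J - {j}) \<times> UNIV. g (j, s) - g p) = ?P j"
    proof -
      have "(\<Prod>p\<in>(J - {j}) \<times> UNIV. g (j, s) - g p) = (\<Prod>i\<in>J - {j}. \<Prod>s'\<in>UNIV. g (j, s) - g (i, s'))"
        by (simp add: prod.cartesian_product)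
      also have "\<dots> = ?P j"
        by (intro prod.cong refl) (cases s; simp add: g_def UNIV_bool power2_eq_square algebra_simps)
      finally show ?thesis .
    qed
    ultimately show "f (g (j, s)) / (\<Prod>p\<in>J \<times> UNIV - {(j, s)}. g (j, s) - g p) = f (g (j, s)) / (2 * g (j, s) * ?P j)"
      using fin by simp
  qed
  also have "\<dots> = (\<Sum>j\<in>J. (f (w j) - f (- w j)) / (2 * w j * ?P j))"
    by (simp add: sum.cartesian_product[symmetric] UNIV_bool g_def diff_divide_distrib)
  finally show ?thesis .
qed

section \<open>Exponential integrals on an interval\<close>

lemma integral_exp_Icc:
  fixes z :: complex and a b :: real
  assumes "z \<noteq> 0" "a \<le> b"
  shows "(\<integral>y. indicator {a..b} y *\<^sub>R exp (z * y) \<partial>lborel) = (exp (z * b) - exp (z * a)) / z"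
proof -
  have "(\<integral>y. indicator {a..b} y *\<^sub>R exp (z * y) \<partial>lborel) = exp (z * b) / z - exp (z * a) / z"
  proof (rule integral_FTC_atLeastAtMost[OF assms(2), where F = "\<lambda>y. exp (z * y) / z"])
    fix x
    show "((\<lambda>y. exp (z * y) / z) has_vector_derivative exp (z * x)) (at x within {a..b})"
      using assms(1)
      by (intro derivative_eq_intros has_complex_derivative_imp_has_vector_derivative[unfolded o_def] | simp)+
  qed (intro continuous_intros)
  then show ?thesis by (simp add: diff_divide_distrib)
qed

lemma integrable_Icc_continuous:
  fixes f :: "real \<Rightarrow> 'a::{banach, second_countable_topology}"
  shows "continuous_on {a..b} f \<Longrightarrow> integrable lborel (\<lambda>y. indicator {a..b} y *\<^sub>R f y)"
  using borel_integrable_atLeastAtMost' unfolding set_integrable_def .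

lemma integral_exp_conv_exp:
  fixes \<mu> l :: complex and t :: real
  assumes "0 \<le> t" "l \<noteq> \<mu>" "l \<noteq> - \<mu>"
  shows "(\<integral>y. indicator {-t..t} y *\<^sub>R (exp (- \<mu> * y) * exp (l * (t - \<bar>y\<bar>))) \<partial>lborel) =
    (exp (- \<mu> * t) - exp (l * t)) / (- \<mu> - l) + (exp (\<mu> * t) - exp (l * t)) / (\<mu> - l)"
proof -
  let ?f = "\<lambda>y. exp (l * t) * (indicator {-t..0} y *\<^sub>R exp ((l - \<mu>) * y))"
  let ?g = "\<lambda>y. exp (l * t) * (indicator {0..t} y *\<^sub>R exp ((- \<mu> - l) * y))"
  have int: "integrable lborel ?f" "integrable lborel ?g"
    by (intro integrable_mult_right integrable_Icc_continuous continuous_intros)+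
  have "AE y in lborel. indicator {-t..t} y *\<^sub>R (exp (- \<mu> * y) * exp (l * (t - \<bar>y\<bar>))) = ?f y + ?g y"
    using AE_lborel_singleton[of 0]
  proof eventually_elim
    case (elim y)
    then show ?case
      by (cases "y < 0") (auto simp: indicator_def exp_add[symmetric] algebra_simps)
  qed
  then have "(\<integral>y. indicator {-t..t} y *\<^sub>R (exp (- \<mu> * y) * exp (l * (t - \<bar>y\<bar>))) \<partial>lborel) =
      integral\<^sup>L lborel ?f + integral\<^sup>L lborel ?g"
    using int by (subst integral_cong_AE[of _ _ "\<lambda>y. ?f y + ?g y"]) auto
  also have "\<dots> = exp (l * t) * ((exp 0 - exp ((l - \<mu>) * - t)) / (l - \<mu>))
      + exp (l * t) * ((exp ((- \<mu> - l) * t) - exp 0) / (- \<mu> - l))"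
    unfolding integral_mult_right_zero using assms by (simp add: integral_exp_Icc)
  also have "\<dots> = (exp (- \<mu> * t) - exp (l * t)) / (- \<mu> - l) + (exp (\<mu> * t) - exp (l * t)) / (\<mu> - l)"
  proof -
    have "exp (l * t) * exp ((l - \<mu>) * - t) = exp (\<mu> * t)"
      "exp (l * t) * exp ((- \<mu> - l) * t) = exp (- \<mu> * t)"
      by (simp_all add: exp_add[symmetric] algebra_simps)
    moreover have "(x - z) / (l - \<mu>) = (z - x) / (\<mu> - l)" for x z :: complex
      by (metis minus_divide_divide minus_diff_eq)
    ultimately show ?thesis by (simp add: right_diff_distrib)
  qed
  finally show ?thesis .
qed

lemma integral_exp_conv_divdiff:
  fixes \<mu> :: complex and L :: "complex set" and t :: real
  assumes "finite L" "0 \<le> t" "\<mu> \<notin> L" "- \<mu> \<notin> L"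
  shows "(\<integral>y. indicator {-t..t} y *\<^sub>R
      (exp (- \<mu> * y) * divdiff L (\<lambda>l. g l * exp (l * (t - \<bar>y\<bar>)))) \<partial>lborel) =
    divdiff L (\<lambda>l. g l * ((exp (- \<mu> * t) - exp (l * t)) / (- \<mu> - l) + (exp (\<mu> * t) - exp (l * t)) / (\<mu> - l)))"
proof -
  let ?P = "\<lambda>l. \<Prod>x\<in>L - {l}. l - x"
  let ?h = "\<lambda>(l::complex) (y::real). indicator {-t..t} y *\<^sub>R (exp (- \<mu> * y) * exp (l * (t - \<bar>y\<bar>)))"
  have int: "integrable lborel (?h l)" for l
    by (intro integrable_Icc_continuous continuous_intros)
  have "(\<integral>y. indicator {-t..t} y *\<^sub>R
        (exp (- \<mu> * y) * divdiff L (\<lambda>l. g l * exp (l * (t - \<bar>y\<bar>)))) \<partial>lborel) =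
      (\<integral>y. (\<Sum>l\<in>L. g l / ?P l * (?h l y)) \<partial>lborel)"
    by (intro Bochner_Integration.integral_cong refl)
      (simp add: divdiff_def sum_distrib_left scaleR_conv_of_real algebra_simps)
  also have "\<dots> = (\<Sum>l\<in>L. g l / ?P l * integral\<^sup>L lborel (?h l))"
    by (simp only: Bochner_Integration.integral_sum integrable_mult_right integral_mult_right_zero int)
  also have "\<dots> = divdiff L (\<lambda>l. g l *
      ((exp (- \<mu> * t) - exp (l * t)) / (- \<mu> - l) + (exp (\<mu> * t) - exp (l * t)) / (\<mu> - l)))"
    unfolding divdiff_def
  proof (intro sum.cong refl)
    fix l assume "l \<in> L"
    then have "integral\<^sup>L lborel (?h l) =
      (exp (- \<mu> * t) - exp (l * t)) / (- \<mu> - l) + (exp (\<mu> * t) - exp (l * t)) / (\<mu> - l)"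
      using assms by (intro integral_exp_conv_exp) auto
    then show "g l / ?P l * integral\<^sup>L lborel (?h l) = g l *
      ((exp (- \<mu> * t) - exp (l * t)) / (- \<mu> - l) + (exp (\<mu> * t) - exp (l * t)) / (\<mu> - l)) / ?P l"
      by simp
  qed
  finally show ?thesis .
qed

section \<open>Fourier transforms of l1 balls\<close>

definition cross_integral :: "'i set \<Rightarrow> ('i \<Rightarrow> real) \<Rightarrow> real \<Rightarrow> complex" where
  "cross_integral I a t = (\<integral>x. (if (\<Sum>i\<in>I. \<bar>x i\<bar>) \<le> t then exp (- \<i> * of_real (\<Sum>i\<in>I. a i * x i)) else 0)
    \<partial>Pi\<^sub>M I (\<lambda>_. lborel))"

lemma integrable_cross_integrand:
  assumes "finite I"
  shows "integrable (Pi\<^sub>M I (\<lambda>_. lborel))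
     (\<lambda>x. if (\<Sum>i\<in>I. \<bar>x i\<bar>) \<le> t then exp (- \<i> * complex_of_real (\<Sum>i\<in>I. a i * x i)) else 0)"
proof (rule integrableI_bounded_set[where A = "Pi\<^sub>E I (\<lambda>_. {-\<bar>t\<bar>..\<bar>t\<bar>})" and B = 1])
  interpret product_sigma_finite "\<lambda>_. lborel" by standard
  show "Pi\<^sub>E I (\<lambda>_. {-\<bar>t\<bar>..\<bar>t\<bar>}) \<in> sets (Pi\<^sub>M I (\<lambda>_. lborel))"
    using assms by (intro sets_PiM_I_finite) auto
  show "emeasure (Pi\<^sub>M I (\<lambda>_. lborel)) (Pi\<^sub>E I (\<lambda>_. {-\<bar>t\<bar>..\<bar>t\<bar>})) < \<infinity>"
    using assms ennreal_power[of "2 * \<bar>t\<bar>" "card I"] by (subst emeasure_PiM) (auto simp: prod_ennreal)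
  have "x \<in> Pi\<^sub>E I (\<lambda>_. {-\<bar>t\<bar>..\<bar>t\<bar>})"
    if "x \<in> space (Pi\<^sub>M I (\<lambda>_. lborel))" "(\<Sum>i\<in>I. \<bar>x i\<bar>) \<le> t" for x
    using that member_le_sum[of _ I "\<lambda>i. \<bar>x i\<bar>"] assms by (fastforce simp: space_PiM abs_le_iff)
  then show "AE x in Pi\<^sub>M I (\<lambda>_. lborel). x \<notin> Pi\<^sub>E I (\<lambda>_. {-\<bar>t\<bar>..\<bar>t\<bar>}) \<longrightarrow>
      (if (\<Sum>i\<in>I. \<bar>x i\<bar>) \<le> t then exp (- \<i> * complex_of_real (\<Sum>i\<in>I. a i * x i)) else 0) = 0"
    by (intro AE_I2) auto
qed (auto simp: norm_exp_eq_Re)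

lemma cross_integral_empty: "cross_integral {} a t = (if 0 \<le> t then 1 else 0)"
  by (simp add: cross_integral_def PiM_empty lebesgue_integral_count_space_finite)

lemma cross_integral_neg: "t < 0 \<Longrightarrow> cross_integral I a t = 0"
  unfolding cross_integral_def by (subst Bochner_Integration.integral_cong[OF refl, where g = "\<lambda>_. 0"])
    (auto simp: not_le intro: less_le_trans[OF _ sum_nonneg])

lemma cross_integral_insert:
  fixes I :: "'i set"
  assumes fin: "finite I" and k: "k \<notin> I"
  shows "cross_integral (insert k I) a t =
    (\<integral>y. exp (- (\<i> * of_real (a k)) * of_real y) * cross_integral I a (t - \<bar>y\<bar>) \<partial>lborel)"
proof -
  interpret product_sigma_finite "\<lambda>_. lborel" by standard
  interpret finite_product_sigma_finite "\<lambda>_. lborel" I by standard (rule fin)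
  let ?f = "\<lambda>x. if (\<Sum>i\<in>insert k I. \<bar>x i\<bar>) \<le> t
    then exp (- \<i> * complex_of_real (\<Sum>i\<in>insert k I. a i * x i)) else 0"
  let ?g = "\<lambda>y. exp (- (\<i> * of_real (a k)) * of_real y) * cross_integral I a (t - \<bar>y\<bar>)"
  have "cross_integral (insert k I) a t =
      (\<integral>x. (\<integral>z. ?f (merge {k} I (x, z)) \<partial>Pi\<^sub>M I (\<lambda>_. lborel)) \<partial>Pi\<^sub>M {k} (\<lambda>_. lborel))"
    unfolding cross_integral_def using k fin integrable_cross_integrand[of "insert k I"]
    by (subst product_integral_fold[symmetric]) auto
  also have "\<dots> = (\<integral>x. ?g (x k) \<partial>Pi\<^sub>M {k} (\<lambda>_. lborel))"
  proof (rule Bochner_Integration.integral_cong[OF refl])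
    fix x :: "'i \<Rightarrow> real"
    have "merge {k} I (x, z) k = x k" "\<And>i. i \<in> I \<Longrightarrow> merge {k} I (x, z) i = z i" for z :: "'i \<Rightarrow> real"
      using k by (auto simp: merge_def)
    then have "?f (merge {k} I (x, z)) = exp (- (\<i> * of_real (a k)) * of_real (x k)) *
      (if (\<Sum>i\<in>I. \<bar>z i\<bar>) \<le> t - \<bar>x k\<bar> then exp (- \<i> * complex_of_real (\<Sum>i\<in>I. a i * z i)) else 0)" for z
      using fin k by (simp add: exp_add[symmetric] algebra_simps)
    then show "(\<integral>z. ?f (merge {k} I (x, z)) \<partial>Pi\<^sub>M I (\<lambda>_. lborel)) = ?g (x k)"
      unfolding cross_integral_def by simp
  qed
  also have "\<dots> = integral\<^sup>L lborel ?g"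
    by (rule product_integral_singleton) (unfold cross_integral_def, measurable)
  finally show ?thesis .
qed

lemma cross_integral_singleton:
  assumes "a k \<noteq> 0" "0 \<le> t"
  shows "cross_integral {k} a t = 2 * divdiff {\<i> * of_real (a k), - (\<i> * of_real (a k))} (\<lambda>z. exp (z * of_real t))"
proof -
  define \<mu> where "\<mu> = \<i> * complex_of_real (a k)"
  have "\<mu> \<noteq> 0" "\<mu> \<noteq> - \<mu>"
    using assms(1) unfolding \<mu>_def by auto
  have "cross_integral {k} a t = (\<integral>y. exp (- \<mu> * of_real y) * cross_integral {} a (t - \<bar>y\<bar>) \<partial>lborel)"
    using cross_integral_insert[of "{}" k a t] by (simp add: \<mu>_def)
  also have "\<dots> = (\<integral>y. indicator {-t..t} y *\<^sub>R exp (- \<mu> * of_real y) \<partial>lborel)"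
    by (intro Bochner_Integration.integral_cong refl) (auto simp: cross_integral_empty indicator_def)
  also have "\<dots> = (exp (- \<mu> * of_real t) - exp (- \<mu> * of_real (- t))) / (- \<mu>)"
    using \<open>\<mu> \<noteq> 0\<close> assms(2) by (intro integral_exp_Icc) auto
  also have "\<dots> = 2 * divdiff {\<mu>, - \<mu>} (\<lambda>z. exp (z * of_real t))"
    using \<open>\<mu> \<noteq> 0\<close> \<open>\<mu> \<noteq> - \<mu>\<close> by (simp add: divdiff_doubleton field_simps)
  finally show ?thesis
    unfolding \<mu>_def .
qed

definition generic_weights :: "'i set \<Rightarrow> ('i \<Rightarrow> real) \<Rightarrow> bool" where
  "generic_weights I a \<longleftrightarrow> (\<forall>i\<in>I. a i \<noteq> 0) \<and> inj_on (\<lambda>i. \<bar>a i\<bar>) I"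

lemma generic_weights_image:
  "inj_on g J \<Longrightarrow> generic_weights J (\<lambda>j. a (g j)) \<Longrightarrow> generic_weights (g ` J) a"
  unfolding generic_weights_def by (auto intro: inj_on_imageI simp: comp_def)

lemma generic_weights_imaginary:
  assumes "generic_weights J a"
  shows "inj_on (\<lambda>j. \<i> * complex_of_real (a j)) J"
    and "\<forall>i\<in>J. \<forall>j\<in>J. \<i> * complex_of_real (a i) \<noteq> - (\<i> * complex_of_real (a j))"
proof -
  have eq: "i = j" if "i \<in> J" "j \<in> J" "\<bar>a i\<bar> = \<bar>a j\<bar>" for i j
    using assms that unfolding generic_weights_def by (auto dest: inj_onD)
  show "inj_on (\<lambda>j. \<i> * complex_of_real (a j)) J"
    by (rule inj_onI) (auto simp: complex_eq_iff intro: eq)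
  show "\<forall>i\<in>J. \<forall>j\<in>J. \<i> * complex_of_real (a i) \<noteq> - (\<i> * complex_of_real (a j))"
  proof (intro ballI notI)
    fix i j assume ij: "i \<in> J" "j \<in> J"
    assume "\<i> * complex_of_real (a i) = - (\<i> * complex_of_real (a j))"
    then have "a i = - a j"
      by (simp add: complex_eq_iff)
    moreover from this have "i = j"
      using eq[OF ij] by simp
    ultimately show False
      using assms ij unfolding generic_weights_def by simp
  qed
qed

lemma cross_integral_eq_divdiff:
  assumes "finite I" "I \<noteq> {}" "generic_weights I a" "0 \<le> t"
  shows "cross_integral I a t = 2 ^ card I *
    divdiff (pm_nodes (\<lambda>j. \<i> * of_real (a j)) I) (\<lambda>z. z ^ (card I - 1) * exp (z * of_real t))"
  using assms
proof (induction I arbitrary: t rule: finite_ne_induct)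
  case (singleton k)
  then show ?case
    by (simp add: cross_integral_singleton pm_nodes_def generic_weights_def insert_commute)
next
  case (insert k I)
  let ?w = "\<lambda>j. \<i> * complex_of_real (a j)"
  let ?L = "pm_nodes ?w I"
  define \<mu> where "\<mu> = ?w k"
  define m where "m = card I"
  have gen: "generic_weights I a"
    using insert.prems(1) unfolding generic_weights_def by (auto intro: inj_on_subset)
  have m: "Suc (m - 1) = m"
    using insert.hyps unfolding m_def by (simp add: card_gt_0_iff)
  have L: "finite ?L" "m - 1 < card ?L"
  proof -
    have "m \<le> card ?L"
      unfolding m_def pm_nodes_def using insert.hyps(1) generic_weights_imaginary(1)[OF gen]
      by (metis card_image card_mono finite_UnI finite_imageI sup_ge1)
    with m show "finite ?L" "m - 1 < card ?L" using insert.hyps(1) by (auto simp: finite_pm_nodes)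
  qed
  have "a k \<noteq> 0" "\<And>j. j \<in> I \<Longrightarrow> \<bar>a j\<bar> \<noteq> \<bar>a k\<bar>"
    using insert.prems(1) insert.hyps(3) unfolding generic_weights_def by (auto simp: image_iff)
  then have \<mu>: "\<mu> \<noteq> 0" "\<mu> \<notin> ?L" "- \<mu> \<notin> ?L"
    unfolding \<mu>_def pm_nodes_def by (auto simp: complex_eq_iff) (metis abs_minus_cancel)+
  have "cross_integral (insert k I) a t = (\<integral>y. exp (- \<mu> * of_real y) * cross_integral I a (t - \<bar>y\<bar>) \<partial>lborel)"
    unfolding \<mu>_def by (rule cross_integral_insert[OF insert.hyps(1,3)])
  also have "\<dots> = (\<integral>y. indicator {-t..t} y *\<^sub>R (exp (- \<mu> * of_real y) *
      divdiff ?L (\<lambda>l. 2 ^ m * l ^ (m - 1) * exp (l * of_real (t - \<bar>y\<bar>)))) \<partial>lborel)"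
  proof (intro Bochner_Integration.integral_cong refl)
    fix y :: real
    show "exp (- \<mu> * of_real y) * cross_integral I a (t - \<bar>y\<bar>) = indicator {-t..t} y *\<^sub>R (exp (- \<mu> * of_real y) *
      divdiff ?L (\<lambda>l. 2 ^ m * l ^ (m - 1) * exp (l * of_real (t - \<bar>y\<bar>))))"
      using insert.IH[OF gen, of "t - \<bar>y\<bar>"] cross_integral_neg[of "t - \<bar>y\<bar>" I a]
      by (auto simp: m_def indicator_def divdiff_cmult[symmetric] mult.assoc)
  qed
  also have "\<dots> = divdiff ?L (\<lambda>l. 2 ^ m * l ^ (m - 1) * ((exp (- \<mu> * of_real t) - exp (l * of_real t)) / (- \<mu> - l)
      + (exp (\<mu> * of_real t) - exp (l * of_real t)) / (\<mu> - l)))"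
    using L \<mu> insert.prems(2) by (intro integral_exp_conv_divdiff) auto
  also have "\<dots> = 2 ^ m * divdiff ?L (\<lambda>l. l ^ (m - 1) * ((exp (- \<mu> * of_real t) - exp (l * of_real t)) / (- \<mu> - l)
      + (exp (\<mu> * of_real t) - exp (l * of_real t)) / (\<mu> - l)))"
    by (simp only: divdiff_cmult[symmetric] mult.assoc)
  also have "\<dots> = 2 ^ m * (2 * divdiff (insert \<mu> (insert (- \<mu>) ?L)) (\<lambda>z. z ^ m * exp (z * of_real t)))"
    using divdiff_insert_pm[OF L \<mu>, of "\<lambda>z. exp (z * of_real t)", unfolded m] by simp
  also have "\<dots> = 2 ^ card (insert k I) * divdiff (pm_nodes ?w (insert k I))
      (\<lambda>z. z ^ (card (insert k I) - 1) * exp (z * of_real t))"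
    using insert.hyps L(2) by (simp add: m_def pm_nodes_insert \<mu>_def)
  finally show ?case .
qed

lemma Basis_real_vec: "(Basis :: (real ^ 'n) set) = range (\<lambda>i. axis i 1)"
  by (auto simp: Basis_vec_def)

lemma inj_axis_1: "inj (\<lambda>i::'n::finite. axis i (1::real))"
  by (auto simp: inj_on_def axis_eq_axis)

lemma fourier_transform_cross_polytope_eq_cross_integral:
  fixes y :: "real ^ 'n"
  shows "fourier_transform (indicator (cross_polytope :: (real ^ 'n) set)) y =
    cross_integral (Basis :: (real ^ 'n) set) (\<lambda>b. 2 * pi * (b \<bullet> y)) 1"
proof -
  define \<phi> :: "((real ^ 'n) \<Rightarrow> real) \<Rightarrow> real ^ 'n" where "\<phi> = (\<lambda>f. \<Sum>b\<in>Basis. f b *\<^sub>R b)"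
  define g where "g = (\<lambda>x::real ^ 'n. indicator cross_polytope x * exp (- 2 * pi * \<i> * complex_of_real (x \<bullet> y)))"
  have "closed (cross_polytope :: (real ^ 'n) set)"
    unfolding cross_polytope_def by (intro closed_Collect_le continuous_intros)
  then have [measurable]: "(cross_polytope :: (real ^ 'n) set) \<in> sets borel"
    by (rule borel_closed)
  have g: "g \<in> borel_measurable borel"
    unfolding g_def by measurable
  have \<phi>: "\<phi> \<in> measurable (Pi\<^sub>M Basis (\<lambda>b. lborel)) borel"
    unfolding \<phi>_def by measurable
  have g_\<phi>: "g (\<phi> x) = (if (\<Sum>b\<in>Basis. \<bar>x b\<bar>) \<le> 1
      then exp (- \<i> * of_real (\<Sum>b\<in>Basis. 2 * pi * (b \<bullet> y) * x b)) else 0)" for x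
  proof -
    have coord: "\<phi> x \<bullet> b = x b" if "b \<in> Basis" for b
      unfolding \<phi>_def using that by simp
    have "(\<Sum>i\<in>UNIV. \<bar>\<phi> x $ i\<bar>) = (\<Sum>b\<in>Basis. \<bar>\<phi> x \<bullet> b\<bar>)"
      by (simp add: Basis_real_vec sum.reindex[OF inj_axis_1] cart_eq_inner_axis)
    also have "\<dots> = (\<Sum>b\<in>Basis. \<bar>x b\<bar>)"
      by (simp add: coord)
    finally have "(\<Sum>i\<in>UNIV. \<bar>\<phi> x $ i\<bar>) = (\<Sum>b\<in>Basis. \<bar>x b\<bar>)" .
    moreover have "\<phi> x \<bullet> y = (\<Sum>b\<in>Basis. x b * (b \<bullet> y))"
      by (subst euclidean_inner) (intro sum.cong refl, simp add: coord, simp add: inner_commute)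
    ultimately show ?thesis
      unfolding g_def cross_polytope_def by (simp add: indicator_def sum_distrib_left algebra_simps)
  qed
  have lborel: "(lborel :: (real ^ 'n) measure) = distr (Pi\<^sub>M Basis (\<lambda>b. lborel)) borel \<phi>"
    unfolding \<phi>_def by (rule lborel_eq)
  have "integrable (Pi\<^sub>M Basis (\<lambda>b. lborel)) (\<lambda>x. g (\<phi> x))"
    unfolding g_\<phi> by (rule integrable_cross_integrand) simp
  then have "integrable lborel g"
    unfolding lborel using integrable_distr_eq[OF \<phi> g] by simp
  then have "fourier_transform (indicator (cross_polytope :: (real ^ 'n) set)) y = integral\<^sup>L lborel g"
    unfolding fourier_transform_def g_def by (rule integral_unique[OF has_integral_integral_lborel])
  also have "\<dots> = (\<integral>x. g (\<phi> x) \<partial>Pi\<^sub>M Basis (\<lambda>b. lborel))"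
    unfolding lborel by (rule integral_distr[OF \<phi> g])
  finally show ?thesis
    unfolding cross_integral_def g_\<phi> .
qed

lemma fourier_transform_cross_polytope_divdiff:
  fixes y :: "real ^ 'n"
  assumes "generic_weights UNIV (\<lambda>i. 2 * pi * y $ i)"
  shows "fourier_transform (indicator (cross_polytope :: (real ^ 'n) set)) y = 2 ^ CARD('n) *
    divdiff (pm_nodes (\<lambda>i. \<i> * complex_of_real (2 * pi * y $ i)) UNIV) (\<lambda>z. z ^ (CARD('n) - 1) * exp z)"
proof -
  have "generic_weights Basis (\<lambda>b. 2 * pi * (b \<bullet> y))"
    unfolding Basis_real_vec using assms by (intro generic_weights_image[OF inj_axis_1]) (simp add: inner_axis')
  then have "fourier_transform (indicator (cross_polytope :: (real ^ 'n) set)) y =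
      2 ^ card (Basis :: (real ^ 'n) set) * divdiff (pm_nodes (\<lambda>b. \<i> * complex_of_real (2 * pi * (b \<bullet> y))) Basis)
        (\<lambda>z. z ^ (card (Basis :: (real ^ 'n) set) - 1) * exp (z * complex_of_real 1))"
    unfolding fourier_transform_cross_polytope_eq_cross_integral by (intro cross_integral_eq_divdiff) auto
  moreover have "card (Basis :: (real ^ 'n) set) = CARD('n)"
    unfolding Basis_real_vec by (simp add: card_image inj_axis_1)
  moreover have "pm_nodes (\<lambda>b. \<i> * complex_of_real (2 * pi * (b \<bullet> y))) Basis =
      pm_nodes (\<lambda>i. \<i> * complex_of_real (2 * pi * y $ i)) UNIV"
    unfolding Basis_real_vec pm_nodes_image by (simp add: inner_axis')
  ultimately show ?thesis
    by simp
qed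

section \<open>Evaluation at the symmetric nodes\<close>

definition parity_trig :: "nat \<Rightarrow> real \<Rightarrow> real" where
  "parity_trig n c = (if odd n then (-1) ^ ((n - 1) div 2) * sin c else (-1) ^ (n div 2 - 1) * cos c)"

lemma odd_part_power_exp_imaginary:
  fixes c :: real
  assumes "c \<noteq> 0" "1 \<le> n"
  shows "((\<i> * c) ^ (n - 1) * exp (\<i> * c) - (- (\<i> * c)) ^ (n - 1) * exp (- (\<i> * c))) / (2 * (\<i> * c)) =
    of_real (parity_trig n c * c ^ (n - 1) / c)"
proof -
  have exp_cis: "exp (\<i> * c) = cis c" "exp (- (\<i> * c)) = cis (- c)"
    by (simp_all add: cis_conv_exp)
  have sq: "(\<i> * complex_of_real c) ^ 2 = - of_real (c ^ 2)"
    by (simp add: power_mult_distrib)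
  have minus_sq_power: "(- complex_of_real (c ^ 2)) ^ p = of_real ((-1) ^ p * c ^ (2 * p))" for p
    by (subst power_minus) (simp add: power_mult)
  show ?thesis
  proof (cases "odd n")
    case True
    then obtain p where p: "n - 1 = 2 * p"
      by (auto elim: oddE)
    have "(\<i> * c) ^ (n - 1) * exp (\<i> * c) - (- (\<i> * c)) ^ (n - 1) * exp (- (\<i> * c)) =
        (\<i> * c) ^ (2 * p) * (exp (\<i> * c) - exp (- (\<i> * c)))"
      unfolding p by (simp add: right_diff_distrib)
    also have "\<dots> = of_real ((-1) ^ p * c ^ (2 * p)) * (2 * \<i> * of_real (sin c))"
      unfolding power_mult sq minus_sq_power exp_cis by (simp add: complex_eq_iff)
    also have "\<dots> / (2 * (\<i> * c)) = of_real ((-1) ^ p * c ^ (2 * p) * sin c / c)"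
      using assms(1) by (simp add: field_simps)
    finally show ?thesis
      using True p by (simp add: parity_trig_def mult_ac)
  next
    case False
    then obtain q where "n = 2 * q"
      by (auto elim: evenE)
    with assms(2) obtain p where p: "n - 1 = 2 * p + 1"
      by (intro that[of "q - 1"]) simp
    have "(\<i> * c) ^ (n - 1) * exp (\<i> * c) - (- (\<i> * c)) ^ (n - 1) * exp (- (\<i> * c)) =
        (\<i> * c) * (\<i> * c) ^ (2 * p) * (exp (\<i> * c) + exp (- (\<i> * c)))"
      unfolding p by (simp add: ring_distribs)
    also have "\<dots> = (\<i> * c) * of_real ((-1) ^ p * c ^ (2 * p)) * (2 * of_real (cos c))"
    proof -
      have "cis c + cis (- c) = 2 * complex_of_real (cos c)"
        by (simp add: complex_eq_iff)
      then show ?thesis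
        unfolding power_mult sq minus_sq_power exp_cis by simp
    qed
    also have "\<dots> / (2 * (\<i> * c)) = of_real ((-1) ^ p * c ^ (2 * p) * cos c)"
      using assms(1) by simp
    moreover have "n div 2 - 1 = p"
      using p by linarith
    ultimately show ?thesis
      using False p assms(1) by (simp add: parity_trig_def mult_ac)
  qed
qed

lemma pi_power_scaling:
  fixes t u P :: real
  assumes "u \<noteq> 0" "P \<noteq> 0"
  shows "2 ^ Suc m * (t * (2 * pi * u) ^ m / (2 * pi * u)) / ((- ((2 * pi) ^ 2)) ^ m * P) =
    (-1) ^ m * pi powi (- int (Suc m)) * (t * u powi (int (Suc m) - 2) / P)"
proof -
  have u: "u powi (int (Suc m) - 2) = u ^ m / u"
    using assms(1) by (simp add: power_int_diff)
  have pi: "pi powi (- int (Suc m)) = 1 / pi ^ Suc m"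
    by (simp only: power_int_minus_divide power_int_of_nat)
  have sq: "(- ((2 * pi) ^ 2)) ^ m = (-1) ^ m * (2 ^ m * pi ^ m) * (2 ^ m * pi ^ m)"
    by (subst power_minus) (simp only: power2_eq_square power_mult_distrib mult.assoc)
  have sign: "((-1::real) ^ m) * (-1) ^ m = 1"
    by (simp add: power_mult_distrib[symmetric])
  show ?thesis
    unfolding u pi sq using assms sign by (simp add: power_mult_distrib field_simps)
qed

lemma divdiff_term_cross_polytope:
  fixes y :: "'j \<Rightarrow> real" and J :: "'j set"
  assumes J: "finite J" "j \<in> J" "card J = n" and y: "y j \<noteq> 0" "(\<Prod>i\<in>J - {j}. y j ^ 2 - y i ^ 2) \<noteq> 0"
  defines "w \<equiv> \<lambda>i. \<i> * complex_of_real (2 * pi * y i)"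
  shows "2 ^ n * ((w j ^ (n - 1) * exp (w j) - (- w j) ^ (n - 1) * exp (- w j)) /
      (2 * w j * (\<Prod>i\<in>J - {j}. w j ^ 2 - w i ^ 2))) =
    of_real ((-1) ^ (n - 1) * pi powi (- int n) * (parity_trig n (2 * pi * y j) * y j powi (int n - 2) /
      (\<Prod>i\<in>J - {j}. y j ^ 2 - y i ^ 2)))"
proof -
  define P where "P = (\<Prod>i\<in>J - {j}. y j ^ 2 - y i ^ 2)"
  define m where "m = n - 1"
  have "0 < n"
    using J card_gt_0_iff by blast
  then have n: "n = Suc m"
    unfolding m_def by simp
  have odd_part: "(w j ^ m * exp (w j) - (- w j) ^ m * exp (- w j)) / (2 * w j) =
      of_real (parity_trig n (2 * pi * y j) * (2 * pi * y j) ^ m / (2 * pi * y j))"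
    using odd_part_power_exp_imaginary[of "2 * pi * y j" n] y(1) n unfolding w_def m_def by simp
  have "(\<Prod>i\<in>J - {j}. w j ^ 2 - w i ^ 2) = (\<Prod>i\<in>J - {j}. of_real (- ((2 * pi) ^ 2) * (y j ^ 2 - y i ^ 2)))"
    by (intro prod.cong refl) (simp add: w_def power_mult_distrib algebra_simps)
  also have "\<dots> = of_real (\<Prod>i\<in>J - {j}. - ((2 * pi) ^ 2) * (y j ^ 2 - y i ^ 2))"
    by (simp only: of_real_prod)
  also have "\<dots> = of_real ((- ((2 * pi) ^ 2)) ^ m * P)"
    using J unfolding P_def m_def prod.distrib prod_constant by (simp add: card_Diff_singleton)
  finally have prod: "(\<Prod>i\<in>J - {j}. w j ^ 2 - w i ^ 2) = of_real ((- ((2 * pi) ^ 2)) ^ m * P)" .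
  have split: "X / (2 * w j * D) = X / (2 * w j) / D" for X D :: complex
    by simp
  have "2 ^ n * ((w j ^ m * exp (w j) - (- w j) ^ m * exp (- w j)) / (2 * w j * (\<Prod>i\<in>J - {j}. w j ^ 2 - w i ^ 2))) =
      of_real (2 ^ n * (parity_trig n (2 * pi * y j) * (2 * pi * y j) ^ m / (2 * pi * y j)) / ((- ((2 * pi) ^ 2)) ^ m * P))"
    unfolding split odd_part prod by simp
  also have "\<dots> = of_real ((-1) ^ m * pi powi (- int n) * (parity_trig n (2 * pi * y j) * y j powi (int n - 2) / P))"
    using pi_power_scaling[OF y(1) y(2)[folded P_def], of m, folded n] by simp
  finally show ?thesis
    unfolding m_def P_def .
qed

lemma sum_power_div_prod_eq_0:
  fixes y :: "'j \<Rightarrow> 'a::field"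
  assumes "finite J" "inj_on (\<lambda>j. y j ^ 2) J" "Suc d < card J"
  shows "(\<Sum>j\<in>J. (y j ^ 2) ^ d / (\<Prod>i\<in>J - {j}. y j ^ 2 - y i ^ 2)) = 0"
proof -
  have "divdiff ((\<lambda>j. y j ^ 2) ` J) (\<lambda>x. x ^ d) = 0"
    using assms by (intro divdiff_power_eq_0) (auto simp: card_image)
  then show ?thesis
    using divdiff_image[OF assms(2), of "\<lambda>x. x ^ d"] by simp
qed

lemma parity_trig_sum_eq:
  fixes y :: "'j \<Rightarrow> real"
  assumes J: "finite J" "J \<noteq> {}" "card J = n" and inj: "inj_on (\<lambda>j. y j ^ 2) J"
  defines "P \<equiv> \<lambda>j. \<Prod>i\<in>J - {j}. y j ^ 2 - y i ^ 2"
  shows "(-1) ^ (n - 1) * pi powi (- int n) * (\<Sum>j\<in>J. parity_trig n (2 * pi * y j) * y j powi (int n - 2) / P j) =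
    (if odd n then
       pi powi (- int n) * (-1) ^ ((n - 1) div 2) * (\<Sum>j\<in>J. y j powi (int n - 2) * sin (2 * pi * y j) / P j)
     else
       pi powi (- int n) * (-1) ^ (n div 2 - 1) * (\<Sum>j\<in>J. 2 * y j powi (int n - 2) * (sin (pi * y j))^2 / P j))"
proof (cases "odd n")
  case True
  then have "(-1::real) ^ (n - 1) = 1"
    by simp
  with True show ?thesis
    by (simp add: parity_trig_def sum_distrib_left mult_ac)
next
  case False
  moreover have "n \<noteq> 0"
    using J by auto
  ultimately obtain d where d: "n = 2 * Suc d"
    by (metis evenE mult_0_right not0_implies_Suc)
  have "int n - 2 = int (2 * d)"
    using d by simp
  then have "(\<Sum>j\<in>J. y j powi (int n - 2) / P j) = 0"
    using sum_power_div_prod_eq_0[OF J(1) inj, of d] J(3) d unfolding P_def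
    by (simp only: power_int_of_nat power_mult[symmetric])
  moreover have "parity_trig n (2 * pi * y j) * y j powi (int n - 2) / P j =
      (-1) ^ (n div 2 - 1) * (y j powi (int n - 2) / P j - 2 * y j powi (int n - 2) * (sin (pi * y j))^2 / P j)"
    for j
  proof -
    have cos: "cos (2 * pi * y j) = 1 - 2 * (sin (pi * y j))^2"
      using cos_double_sin[of "pi * y j"] by (simp add: mult.assoc)
    show ?thesis
      unfolding parity_trig_def cos using False by (simp add: diff_divide_distrib algebra_simps)
  qed
  moreover have "(-1::real) ^ (n - 1) = -1"
    using d by simp
  ultimately show ?thesis
    using False by (simp add: sum_distrib_left[symmetric] sum_subtractf)
qed

lemma divdiff_cross_polytope_sum:
  fixes y :: "'j \<Rightarrow> real"
  assumes J: "finite J" "card J = n" and gen: "generic_weights J (\<lambda>j. 2 * pi * y j)"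
    and inj: "inj_on (\<lambda>j. y j ^ 2) J"
  shows "2 ^ n * divdiff (pm_nodes (\<lambda>j. \<i> * complex_of_real (2 * pi * y j)) J) (\<lambda>z. z ^ (n - 1) * exp z) =
    of_real ((-1) ^ (n - 1) * pi powi (- int n) *
      (\<Sum>j\<in>J. parity_trig n (2 * pi * y j) * y j powi (int n - 2) / (\<Prod>i\<in>J - {j}. y j ^ 2 - y i ^ 2)))"
  unfolding divdiff_pm_nodes[OF J(1) generic_weights_imaginary[OF gen]] sum_distrib_left of_real_sum
proof (intro sum.cong refl divdiff_term_cross_polytope J)
  fix j assume j: "j \<in> J"
  then show "j \<in> J" "y j \<noteq> 0"
    using gen unfolding generic_weights_def by simp_all
  show "(\<Prod>i\<in>J - {j}. y j ^ 2 - y i ^ 2) \<noteq> 0"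
    using J(1) j inj by (auto simp: prod_zero_iff dest: inj_onD)
qed

lemma generic_weights_vec:
  fixes y :: "real ^ 'n"
  assumes nonzero: "\<And>j. y $ j \<noteq> 0" and distinct: "\<And>i j. i \<noteq> j \<Longrightarrow> (y $ i)^2 \<noteq> (y $ j)^2"
    and "c \<noteq> 0"
  shows "generic_weights UNIV (\<lambda>i. c * y $ i)"
  unfolding generic_weights_def
proof (intro conjI inj_onI)
  show "\<forall>i\<in>UNIV. c * y $ i \<noteq> 0"
    using nonzero \<open>c \<noteq> 0\<close> by simp
  fix i j assume "\<bar>c * y $ i\<bar> = \<bar>c * y $ j\<bar>"
  then have "\<bar>y $ i\<bar>^2 = \<bar>y $ j\<bar>^2"
    using \<open>c \<noteq> 0\<close> by (simp add: abs_mult)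
  then show "i = j"
    using distinct by (metis power2_abs)
qed

theorem mainTheorem9:
  fixes y :: "real ^ 'n"
  assumes nonzero: "\<And>j. y $ j \<noteq> 0"
    and distinct: "\<And>i j. i \<noteq> j \<Longrightarrow> (y $ i)^2 \<noteq> (y $ j)^2"
  shows "fourier_transform (indicator (cross_polytope :: (real ^ 'n) set)) y =
    complex_of_real
     (if odd CARD('n) then
        pi powi (- int CARD('n)) * (-1) ^ ((CARD('n) - 1) div 2) *
        (\<Sum>j\<in>UNIV. (y $ j) powi (int CARD('n) - 2) * sin (2 * pi * y $ j) /
                    (\<Prod>i\<in>UNIV - {j}. (y $ j)^2 - (y $ i)^2))
      else
        pi powi (- int CARD('n)) * (-1) ^ (CARD('n) div 2 - 1) *
        (\<Sum>j\<in>UNIV. 2 * (y $ j) powi (int CARD('n) - 2) * (sin (pi * y $ j))^2 /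
                    (\<Prod>i\<in>UNIV - {j}. (y $ j)^2 - (y $ i)^2)))"
proof -
  have gen: "generic_weights UNIV (\<lambda>i. 2 * pi * y $ i)"
    using generic_weights_vec[of y "2 * pi"] nonzero distinct by simp
  have sq_inj: "inj (\<lambda>i. (y $ i)^2)"
    using distinct by (auto intro: inj_onI)
  show ?thesis
    unfolding fourier_transform_cross_polytope_divdiff[OF gen]
      divdiff_cross_polytope_sum[OF finite_class.finite_UNIV refl gen sq_inj]
      parity_trig_sum_eq[OF finite_class.finite_UNIV UNIV_not_empty refl sq_inj] ..
qed

end
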